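(* Let $\mathcal{A}$ be a finite poset, $V$ a vector space and $(\pi_a)_{a\in\mathcal{A}}$ a family of projectors of $V$ satisfying the intersection property. Then $s_as_b=\delta_{a,b}s_a$ for all $a,b\in\mathcal{A}$.
   Context: $(s_a)_{a\in\mathcal{A}}$ is the unique family of endomorphisms of $V$ with $\pi_a=\sum_{b\le a}s_b$ for every $a$ (Möbius inversion). Intersection property: for all $a,b\in\mathcal{A}$, $\pi_a\pi_b=\sum_{c\le a,\ c\le b}s_c$. *)

theory Defs
  imports Complex_Main
begin

end

theory Submission
  imports Defs
begin

text \<open>Moebius inversion gives \<open>s b = \<pi> b - (\<Sum>c<b. s c)\<close>, so statements about \<open>s\<close> can be proved
by well-founded induction along the finite order. Applying \<open>\<pi> a\<close> to this recursion and using the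
intersection property yields \<open>\<pi> a \<circ> s b = s b\<close> if \<open>b \<le> a\<close> and \<open>0\<close> otherwise. Then
\<open>s a \<circ> s b = \<pi> a \<circ> s b - (\<Sum>c<a. s c \<circ> s b)\<close>, and by induction on \<open>a\<close> the sum is \<open>s b\<close> exactly
when \<open>b < a\<close>, leaving \<open>s b\<close> for \<open>a = b\<close> and \<open>0\<close> otherwise.\<close>

lemma wfP_less_finite: "wfP ((<) :: 'a::{finite, preorder} \<Rightarrow> 'a \<Rightarrow> bool)"
  by (rule strict_partial_order_wfp_on_finite_set) (auto intro: transp_onI asymp_onI)

lemma sum_atMost_eq_add_sum_less:
  fixes f :: "'a::{finite, order} \<Rightarrow> 'b::comm_monoid_add"
  shows "(\<Sum>c\<in>{c. c \<le> b}. f c) = f b + (\<Sum>c\<in>{c. c < b}. f c)"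
proof -
  have "{c. c \<le> b} = insert b {c. c < b}" by auto
  then show ?thesis by simp
qed

context
  fixes \<pi> s :: "'a::{finite, order} \<Rightarrow> 'v::ab_group_add \<Rightarrow> 'v"
  assumes moebius: "\<And>a x. \<pi> a x = (\<Sum>b\<in>{b. b \<le> a}. s b x)"
begin

lemma moebius_recursion: "s b x = \<pi> b x - (\<Sum>c\<in>{c. c < b}. s c x)"
  using moebius[of b x] by (simp add: sum_atMost_eq_add_sum_less)

lemma projection_comp_moebius:
  assumes additive: "additive (\<pi> a)"
    and intersection: "\<And>b x. \<pi> a (\<pi> b x) = (\<Sum>c\<in>{c. c \<le> a \<and> c \<le> b}. s c x)"
  shows "\<pi> a (s b x) = (if b \<le> a then s b x else 0)"
proof (induction b rule: wfp_induct_rule[OF wfP_less_finite])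
  case (1 b)
  interpret additive "\<pi> a" by (rule additive)
  have "\<pi> a (s b x) = \<pi> a (\<pi> b x) - (\<Sum>c\<in>{c. c < b}. \<pi> a (s c x))"
    by (simp add: moebius_recursion[of b x] diff sum)
  also have "(\<Sum>c\<in>{c. c < b}. \<pi> a (s c x)) = (\<Sum>c\<in>{c. c < b \<and> c \<le> a}. s c x)"
    using 1 by (simp add: sum.If_cases Collect_conj_eq Int_commute)
  finally have "\<pi> a (s b x) =
      (\<Sum>c\<in>{c. c \<le> a \<and> c \<le> b}. s c x) - (\<Sum>c\<in>{c. c < b \<and> c \<le> a}. s c x)"
    by (simp add: intersection)
  moreover have "{c. c \<le> a \<and> c \<le> b} =
      (if b \<le> a then insert b {c. c < b \<and> c \<le> a} else {c. c < b \<and> c \<le> a})"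
    by (auto simp: order.order_iff_strict)
  ultimately show ?case by simp
qed

lemma moebius_orthogonal_idempotents:
  assumes additive: "\<And>a. additive (\<pi> a)"
    and intersection: "\<And>a b x. \<pi> a (\<pi> b x) = (\<Sum>c\<in>{c. c \<le> a \<and> c \<le> b}. s c x)"
  shows "s a (s b x) = (if a = b then s a x else 0)"
proof (induction a rule: wfp_induct_rule[OF wfP_less_finite])
  case (1 a)
  have "s a (s b x) = \<pi> a (s b x) - (\<Sum>c\<in>{c. c < a}. s c (s b x))"
    by (rule moebius_recursion)
  also have "(\<Sum>c\<in>{c. c < a}. s c (s b x)) = (if b < a then s b x else 0)"
    using 1 by (simp add: sum.delta[of "{c. c < a}" b, simplified])
  finally show ?case
    using projection_comp_moebius[OF additive intersection, of a b x]
    by (auto simp: order.order_iff_strict)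
qed

end

theorem mainTheorem7:
  fixes scale :: "'k::field \<Rightarrow> 'v::ab_group_add \<Rightarrow> 'v"
    and \<pi> s :: "'a::{finite, order} \<Rightarrow> 'v \<Rightarrow> 'v"
  assumes vs: "vector_space scale"
    and proj_lin: "\<And>a. Vector_Spaces.linear scale scale (\<pi> a)"
    and proj_idem: "\<And>a. \<pi> a \<circ> \<pi> a = \<pi> a"
    and s_lin: "\<And>a. Vector_Spaces.linear scale scale (s a)"
    and moebius: "\<And>a x. \<pi> a x = (\<Sum>b\<in>{b. b \<le> a}. s b x)"
    and intersection: "\<And>a b x. \<pi> a (\<pi> b x) = (\<Sum>c\<in>{c. c \<le> a \<and> c \<le> b}. s c x)"
  shows "\<And>a b x. s a (s b x) = (if a = b then s a x else 0)"
proof -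
  have additive: "additive (\<pi> a)" for a
    using proj_lin[of a] by (intro additive.intro) (simp add: Vector_Spaces.linear_iff)
  show "\<And>a b x. s a (s b x) = (if a = b then s a x else 0)"
    by (rule moebius_orthogonal_idempotents[OF moebius additive intersection])
qed

end
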